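(* Let $S\subseteq\Sigma^n$ be a double-code and $i\in[n]$. (a) $S$ is complementable if and only if $\backslash_i S$ is a complementable double-code. (b) $S$ is prime if and only if $\backslash_i S$ is a prime double-code.
   Context: Let $\Sigma=\{0,1,2,3\}$, $[n]=\{1,\ldots,n\}$. An $i$-line of $\Sigma^n$ is a set of the four words that agree in all coordinates except the $i$th; a line is an $i$-line for some $i$. A double-code is a set meeting every line in $0$ or $2$ elements; a double-MDS-code is a set meeting every line in exactly $2$ elements; a double-code is complementable if contained in a double-MDS-code, and prime if complementable, nonempty and not partitionable into two or more nonempty double-codes. For $S\subseteq\Sigma^n$ and $i\in[n]$, $\mathcal E_i(S)$ is the union of all $i$-lines that meet $S$, and $\backslash_i S=\mathcal E_i(S)\setminus S$. *)

theory Defs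
  imports Main
begin

text \<open>Words of Sigma^n, Sigma = {0,1,2,3}, are lists of length n with entries below 4.
  Coordinate i (1-based, i in [n]) is the list position i - 1.\<close>

definition words :: "nat \<Rightarrow> nat list set" where
  "words n = {x. length x = n \<and> (\<forall>a\<in>set x. a < 4)}"

definition iline :: "nat \<Rightarrow> nat \<Rightarrow> nat list set \<Rightarrow> bool" where
  "iline n i L \<longleftrightarrow> i \<in> {1..n} \<and>
     (\<exists>x\<in>words n. L = {x[i - 1 := a] | a. a < 4})"

definition is_line :: "nat \<Rightarrow> nat list set \<Rightarrow> bool" where
  "is_line n L \<longleftrightarrow> (\<exists>i. iline n i L)"

definition double_code :: "nat \<Rightarrow> nat list set \<Rightarrow> bool" where
  "double_code n S \<longleftrightarrow> S \<subseteq> words n \<and>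
     (\<forall>L. is_line n L \<longrightarrow> card (S \<inter> L) = 0 \<or> card (S \<inter> L) = 2)"

definition double_MDS_code :: "nat \<Rightarrow> nat list set \<Rightarrow> bool" where
  "double_MDS_code n S \<longleftrightarrow> S \<subseteq> words n \<and>
     (\<forall>L. is_line n L \<longrightarrow> card (S \<inter> L) = 2)"

definition complementable :: "nat \<Rightarrow> nat list set \<Rightarrow> bool" where
  "complementable n S \<longleftrightarrow> double_code n S \<and> (\<exists>M. double_MDS_code n M \<and> S \<subseteq> M)"

definition prime_code :: "nat \<Rightarrow> nat list set \<Rightarrow> bool" where
  "prime_code n S \<longleftrightarrow> complementable n S \<and> S \<noteq> {} \<and>
     \<not> (\<exists>P. card P \<ge> 2 \<and> (\<forall>T\<in>P. T \<noteq> {} \<and> double_code n T) \<and>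
            (\<forall>T\<in>P. \<forall>U\<in>P. T \<noteq> U \<longrightarrow> T \<inter> U = {}) \<and> \<Union>P = S)"

definition ext_i :: "nat \<Rightarrow> nat \<Rightarrow> nat list set \<Rightarrow> nat list set" where
  "ext_i n i S = \<Union>{L. iline n i L \<and> L \<inter> S \<noteq> {}}"

definition bs_i :: "nat \<Rightarrow> nat \<Rightarrow> nat list set \<Rightarrow> nat list set" where
  "bs_i n i S = ext_i n i S - S"

end

theory Submission
  imports Defs
begin

(* Let S be a double code inside a double-MDS code M. On an i-line meeting S, the 2-sets
   cut out by S and by M coincide, so \_i S lies in the complement of M, which is again a
   double-MDS code. On a j-line with j \<noteq> i, the number of points of \_i S is counted in
   the 4 x 4 plane spanned by the directions i and j, where a parity argument shows that it
   is 0 or 2. Every i-line meeting a double code meets it in two of its four points, so \_i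
   is an involution on double codes, and both properties transfer back from \_i S to S.
   For primality, X \<mapsto> \_i X sends a partition of \_i S into double codes to one of S,
   since a subcode X of \_i S agrees with \_i S on every i-line meeting X. *)

definition count4 :: "(nat \<Rightarrow> bool) \<Rightarrow> nat" where
  "count4 P = card {b. b < 4 \<and> P b}"

lemma count4_eq_sum: "count4 P = (\<Sum>b<4. of_bool (P b))"
  by (simp add: count4_def lessThan_def Collect_conj_eq Int_commute)

lemma count4_cong: "(\<And>b. b < 4 \<Longrightarrow> P b = Q b) \<Longrightarrow> count4 P = count4 Q"
  unfolding count4_def by (metis (lifting))

lemma count4_eq_0_iff: "count4 P = 0 \<longleftrightarrow> (\<forall>b<4. \<not> P b)"
  by (auto simp: count4_def)

lemma count4_conj_split: "count4 (\<lambda>b. R b \<and> P b) + count4 (\<lambda>b. R b \<and> \<not> P b) = count4 R"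
  unfolding count4_eq_sum sum.distrib[symmetric] by (rule sum.cong) auto

lemma count4_not: "count4 P + count4 (\<lambda>b. \<not> P b) = 4"
  using count4_conj_split[of "\<lambda>_. True" P] by (simp add: count4_eq_sum)

lemma count4_mono: "(\<And>b. b < 4 \<Longrightarrow> P b \<Longrightarrow> Q b) \<Longrightarrow> count4 P \<le> count4 Q"
  unfolding count4_def by (rule card_mono) auto

lemma count4_eq_imp_eq:
  assumes "\<And>b. b < 4 \<Longrightarrow> P b \<Longrightarrow> Q b" "count4 P = count4 Q" "b < 4"
  shows "P b = Q b"
proof -
  have "{b. b < 4 \<and> P b} = {b. b < 4 \<and> Q b}"
    by (rule card_subset_eq) (use assms in \<open>auto simp: count4_def\<close>)
  then show ?thesis using assms(3) by blast
qed

(* The rows meeting s are exactly those where s and m coincide; let r be their number.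
   In column a these rows split as r = (points of s) + (rows missing column a), the latter
   at most 2 since column a of m misses only 2 rows. If r were odd, every column would be
   missed by exactly one of these rows, and counting the cells outside m in them would give
   4 = 2 r. *)
lemma grid_rows_missing_column:
  fixes s m :: "nat \<Rightarrow> nat \<Rightarrow> bool"
  assumes s_rows: "\<And>b. b < 4 \<Longrightarrow> count4 (s b) = 0 \<or> count4 (s b) = 2"
    and m_rows: "\<And>b. b < 4 \<Longrightarrow> count4 (m b) = 2"
    and s_cols: "\<And>a. a < 4 \<Longrightarrow> count4 (\<lambda>b. s b a) = 0 \<or> count4 (\<lambda>b. s b a) = 2"
    and m_cols: "\<And>a. a < 4 \<Longrightarrow> count4 (\<lambda>b. m b a) = 2"
    and s_le_m: "\<And>a b. a < 4 \<Longrightarrow> b < 4 \<Longrightarrow> s b a \<Longrightarrow> m b a"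
    and "a0 < 4"
  shows "count4 (\<lambda>b. \<not> s b a0 \<and> (\<exists>a<4. s b a)) = 0 \<or>
         count4 (\<lambda>b. \<not> s b a0 \<and> (\<exists>a<4. s b a)) = 2"
proof -
  define r where "r b \<longleftrightarrow> (\<exists>a<4. s b a)" for b
  have s_eq: "s b a \<longleftrightarrow> r b \<and> m b a" if "b < 4" "a < 4" for a b
  proof (cases "r b")
    case True
    then have "count4 (s b) \<noteq> 0"
      by (auto simp: r_def count4_eq_0_iff)
    then have "count4 (s b) = count4 (m b)"
      using s_rows[of b] m_rows[of b] that by auto
    then show ?thesis using True count4_eq_imp_eq[of "s b" "m b" a] s_le_m that by blast
  qed (use that r_def in auto)
  have r_cols: "count4 (\<lambda>b. r b \<and> m b a) = 0 \<or> count4 (\<lambda>b. r b \<and> m b a) = 2" if "a < 4" for a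
    using s_cols[OF that] count4_cong[of "\<lambda>b. s b a" "\<lambda>b. r b \<and> m b a"] s_eq that by auto
  have r_split: "count4 (\<lambda>b. r b \<and> m b a) + count4 (\<lambda>b. r b \<and> \<not> m b a) = count4 r" for a
    by (rule count4_conj_split)
  have m_off_rows: "count4 (\<lambda>a. \<not> m b a) = 2" if "b < 4" for b
    using count4_not[of "m b"] m_rows[OF that] by simp
  have m_off_cols: "count4 (\<lambda>b. \<not> m b a) = 2" if "a < 4" for a
    using count4_not[of "\<lambda>b. m b a"] m_cols[OF that] by simp
  have r_off_le: "count4 (\<lambda>b. r b \<and> \<not> m b a) \<le> 2" if "a < 4" for a
    using count4_mono[of "\<lambda>b. r b \<and> \<not> m b a" "\<lambda>b. \<not> m b a"] m_off_cols[OF that] by auto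
  have "count4 (\<lambda>b. \<not> s b a0 \<and> (\<exists>a<4. s b a)) = count4 (\<lambda>b. r b \<and> \<not> m b a0)"
    by (rule count4_cong) (use s_eq \<open>a0 < 4\<close> r_def in blast)
  moreover have "even (count4 r)"
  proof (rule ccontr)
    assume odd: "odd (count4 r)"
    have one: "count4 (\<lambda>b. r b \<and> \<not> m b a) = 1" if "a < 4" for a
      using r_cols[OF that] r_off_le[OF that] r_split[of a] odd by presburger
    have "4 = (\<Sum>a<4::nat. count4 (\<lambda>b. r b \<and> \<not> m b a))"
      using one by simp
    also have "\<dots> = (\<Sum>b<4::nat. \<Sum>a<4::nat. of_bool (r b \<and> \<not> m b a))"
      unfolding count4_eq_sum by (rule sum.swap)
    also have "\<dots> = (\<Sum>b<4::nat. of_bool (r b) * count4 (\<lambda>a. \<not> m b a))"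
      by (rule sum.cong) (auto simp: count4_eq_sum)
    also have "\<dots> = (\<Sum>b<4::nat. of_bool (r b) * 2)"
      by (rule sum.cong) (use m_off_rows in auto)
    also have "\<dots> = 2 * count4 r"
      by (simp add: count4_eq_sum sum_distrib_right mult.commute)
    finally have "count4 r = 2" by simp
    then show False using odd by simp
  qed
  ultimately show ?thesis
    using r_cols[OF \<open>a0 < 4\<close>] r_off_le[OF \<open>a0 < 4\<close>] r_split[of a0] by presburger
qed

lemma length_words: "x \<in> words n \<Longrightarrow> length x = n"
  unfolding words_def by auto

lemma nth_words: "x \<in> words n \<Longrightarrow> k < n \<Longrightarrow> x ! k < 4"
  unfolding words_def by auto

lemma update_words: "x \<in> words n \<Longrightarrow> a < 4 \<Longrightarrow> x[k := a] \<in> words n"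
  unfolding words_def using set_update_subset_insert by fastforce

definition line :: "nat \<Rightarrow> nat list \<Rightarrow> nat list set" where
  "line k x = {x[k := a] | a. a < 4}"

lemma is_line_iff: "is_line n L \<longleftrightarrow> (\<exists>k<n. \<exists>x\<in>words n. L = line k x)"
proof
  assume "is_line n L"
  then obtain i where "iline n i L" unfolding is_line_def by blast
  then show "\<exists>k<n. \<exists>x\<in>words n. L = line k x"
    unfolding iline_def line_def by (intro exI[of _ "i - 1"]) auto
next
  assume "\<exists>k<n. \<exists>x\<in>words n. L = line k x"
  then obtain k where "k < n" "\<exists>x\<in>words n. L = line k x" by blast
  then show "is_line n L"
    unfolding is_line_def iline_def line_def by (intro exI[of _ "Suc k"]) auto
qed

lemma card_Int_line: "k < length x \<Longrightarrow> card (A \<inter> line k x) = count4 (\<lambda>a. x[k := a] \<in> A)"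
proof -
  assume "k < length x"
  then have "inj (\<lambda>a. x[k := a])"
    by (metis injI nth_list_update_eq)
  moreover have "A \<inter> line k x = (\<lambda>a. x[k := a]) ` {a. a < 4 \<and> x[k := a] \<in> A}"
    unfolding line_def by auto
  ultimately show ?thesis
    unfolding count4_def by (simp add: card_image inj_on_subset)
qed

lemma all_lines_iff_all_rows:
  "(\<forall>L. is_line n L \<longrightarrow> Q (card (S \<inter> L))) \<longleftrightarrow>
   (\<forall>k<n. \<forall>x\<in>words n. Q (count4 (\<lambda>a. x[k := a] \<in> S)))"
  unfolding is_line_iff by (metis card_Int_line length_words)

lemma double_code_iff_rows:
  "double_code n S \<longleftrightarrow> S \<subseteq> words n \<and> (\<forall>k<n. \<forall>x\<in>words n.
     count4 (\<lambda>a. x[k := a] \<in> S) = 0 \<or> count4 (\<lambda>a. x[k := a] \<in> S) = 2)"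
  unfolding double_code_def
  using all_lines_iff_all_rows[of n "\<lambda>c. c = 0 \<or> c = 2" S] by simp

lemma double_MDS_code_iff_rows:
  "double_MDS_code n S \<longleftrightarrow> S \<subseteq> words n \<and> (\<forall>k<n. \<forall>x\<in>words n. count4 (\<lambda>a. x[k := a] \<in> S) = 2)"
  unfolding double_MDS_code_def
  using all_lines_iff_all_rows[of n "\<lambda>c. c = 2" S] by simp

lemma double_code_row:
  "double_code n S \<Longrightarrow> k < n \<Longrightarrow> x \<in> words n \<Longrightarrow>
    count4 (\<lambda>a. x[k := a] \<in> S) = 0 \<or> count4 (\<lambda>a. x[k := a] \<in> S) = 2"
  unfolding double_code_iff_rows by blast

lemma double_MDS_code_row:
  "double_MDS_code n M \<Longrightarrow> k < n \<Longrightarrow> x \<in> words n \<Longrightarrow> count4 (\<lambda>a. x[k := a] \<in> M) = 2"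
  unfolding double_MDS_code_iff_rows by blast

lemma complementable_imp_double_code: "complementable n S \<Longrightarrow> double_code n S"
  unfolding complementable_def by blast

lemma double_code_subset_words: "double_code n S \<Longrightarrow> S \<subseteq> words n"
  unfolding double_code_def by blast

lemma double_MDS_code_imp_double_code: "double_MDS_code n M \<Longrightarrow> double_code n M"
  unfolding double_MDS_code_def double_code_def by blast

lemma double_MDS_code_Diff_words:
  assumes "double_MDS_code n M"
  shows "double_MDS_code n (words n - M)"
  unfolding double_MDS_code_iff_rows
proof safe
  fix k x assume "k < n" "x \<in> words n"
  then have "count4 (\<lambda>a. x[k := a] \<in> words n - M) = count4 (\<lambda>a. x[k := a] \<notin> M)"
    by (intro count4_cong) (simp add: update_words)
  then show "count4 (\<lambda>a. x[k := a] \<in> words n - M) = 2"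
    using count4_not[of "\<lambda>a. x[k := a] \<in> M"] double_MDS_code_row[OF assms \<open>k < n\<close> \<open>x \<in> words n\<close>]
    by simp
qed

lemma double_code_row_not_full:
  assumes "double_code n S" "k < n" "x \<in> words n"
  shows "\<exists>a<4. x[k := a] \<notin> S"
  using double_code_row[OF assms] count4_not[of "\<lambda>a. x[k := a] \<in> S"]
    count4_eq_0_iff[of "\<lambda>a. x[k := a] \<notin> S"] by auto

lemma double_code_subset_row_eq:
  assumes "double_code n X" "double_code n T" "X \<subseteq> T" "k < n" "x \<in> words n"
    and "a < 4" "x[k := a] \<in> X" "b < 4"
  shows "x[k := b] \<in> X \<longleftrightarrow> x[k := b] \<in> T"
proof (rule count4_eq_imp_eq)
  have "count4 (\<lambda>a. x[k := a] \<in> X) \<noteq> 0" and "count4 (\<lambda>a. x[k := a] \<in> T) \<noteq> 0"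
    using assms(3,6,7) by (auto simp: count4_eq_0_iff)
  then show "count4 (\<lambda>a. x[k := a] \<in> X) = count4 (\<lambda>a. x[k := a] \<in> T)"
    using double_code_row[OF assms(1,4,5)] double_code_row[OF assms(2,4,5)] by auto
qed (use assms in auto)

definition ext_dir :: "nat \<Rightarrow> nat \<Rightarrow> nat list set \<Rightarrow> nat list set" where
  "ext_dir n k S = {y \<in> words n. \<exists>a<4. y[k := a] \<in> S}"

definition bs_dir :: "nat \<Rightarrow> nat \<Rightarrow> nat list set \<Rightarrow> nat list set" where
  "bs_dir n k S = ext_dir n k S - S"

lemma ext_i_eq_ext_dir:
  assumes "i \<in> {1..n}"
  shows "ext_i n i S = ext_dir n (i - 1) S"
proof
  show "ext_i n i S \<subseteq> ext_dir n (i - 1) S"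
    unfolding ext_i_def iline_def ext_dir_def by (auto simp: update_words)
next
  show "ext_dir n (i - 1) S \<subseteq> ext_i n i S"
  proof
    fix y assume "y \<in> ext_dir n (i - 1) S"
    then obtain a where y: "y \<in> words n" "a < 4" "y[i - 1 := a] \<in> S"
      unfolding ext_dir_def by blast
    let ?L = "{y[i - 1 := b] | b. b < 4}"
    have "iline n i ?L" unfolding iline_def using assms y(1) by blast
    moreover have "y \<in> ?L"
      using nth_words[OF y(1)] assms by (intro CollectI exI[of _ "y ! (i - 1)"]) auto
    moreover have "?L \<inter> S \<noteq> {}" using y by blast
    ultimately show "y \<in> ext_i n i S" unfolding ext_i_def by blast
  qed
qed

lemma bs_i_eq_bs_dir: "i \<in> {1..n} \<Longrightarrow> bs_i n i S = bs_dir n (i - 1) S"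
  unfolding bs_i_def bs_dir_def by (simp add: ext_i_eq_ext_dir)

lemma subset_ext_dir: "S \<subseteq> words n \<Longrightarrow> k < n \<Longrightarrow> S \<subseteq> ext_dir n k S"
  unfolding ext_dir_def using nth_words by fastforce

lemma ext_dir_bs_dir:
  assumes "double_code n S" "k < n"
  shows "ext_dir n k (bs_dir n k S) = ext_dir n k S"
proof -
  have "(\<exists>a<4. y[k := a] \<in> bs_dir n k S) \<longleftrightarrow> (\<exists>a<4. y[k := a] \<in> S)" if y: "y \<in> words n" for y
  proof
    assume "\<exists>a<4. y[k := a] \<in> S"
    moreover obtain a where "a < 4" "y[k := a] \<notin> S"
      using double_code_row_not_full[OF assms y] by blast
    ultimately show "\<exists>a<4. y[k := a] \<in> bs_dir n k S"
      using y by (auto simp: bs_dir_def ext_dir_def update_words)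
  qed (auto simp: bs_dir_def ext_dir_def)
  then show ?thesis unfolding ext_dir_def by blast
qed

lemma bs_dir_bs_dir:
  assumes "double_code n S" "k < n"
  shows "bs_dir n k (bs_dir n k S) = S"
  using ext_dir_bs_dir[OF assms] subset_ext_dir[OF double_code_subset_words[OF assms(1)] assms(2)]
  unfolding bs_dir_def by blast

lemma bs_dir_not_empty:
  assumes "double_code n S" "S \<noteq> {}" "k < n"
  shows "bs_dir n k S \<noteq> {}"
proof -
  obtain s where s: "s \<in> S" "s \<in> words n"
    using assms(2) double_code_subset_words[OF assms(1)] by blast
  obtain a where a: "a < 4" "s[k := a] \<notin> S"
    using double_code_row_not_full[OF assms(1,3) s(2)] by blast
  have "(s[k := a])[k := s ! k] \<in> S" using s by simp
  then have "s[k := a] \<in> bs_dir n k S"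
    using a nth_words[OF s(2) assms(3)] update_words[OF s(2)]
    unfolding bs_dir_def ext_dir_def by blast
  then show ?thesis by blast
qed

lemma bs_dir_subset_Diff_words:
  assumes "double_code n S" "double_MDS_code n M" "S \<subseteq> M" "k < n"
  shows "bs_dir n k S \<subseteq> words n - M"
proof
  fix y assume "y \<in> bs_dir n k S"
  then obtain a where y: "y \<in> words n" "a < 4" "y[k := a] \<in> S" "y \<notin> S"
    unfolding bs_dir_def ext_dir_def by blast
  have "y[k := y ! k] \<in> S \<longleftrightarrow> y[k := y ! k] \<in> M"
    using double_code_subset_row_eq[OF assms(1) double_MDS_code_imp_double_code[OF assms(2)]
        assms(3,4) y(1-3)] nth_words[OF y(1) assms(4)] by blast
  then show "y \<in> words n - M" using y by simp
qed

lemma bs_dir_row_same_dir: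
  assumes "double_code n S" "k < n" "x \<in> words n"
  shows "count4 (\<lambda>a. x[k := a] \<in> bs_dir n k S) = 0 \<or> count4 (\<lambda>a. x[k := a] \<in> bs_dir n k S) = 2"
proof (cases "\<exists>a<4. x[k := a] \<in> S")
  case True
  then have "count4 (\<lambda>a. x[k := a] \<in> bs_dir n k S) = count4 (\<lambda>a. x[k := a] \<notin> S)"
    using assms(3) by (intro count4_cong) (auto simp: bs_dir_def ext_dir_def update_words)
  moreover have "count4 (\<lambda>a. x[k := a] \<in> S) = 2"
    using double_code_row[OF assms] True by (auto simp: count4_eq_0_iff)
  ultimately show ?thesis using count4_not[of "\<lambda>a. x[k := a] \<in> S"] by simp
next
  case False
  then show ?thesis by (auto simp: count4_eq_0_iff bs_dir_def ext_dir_def)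
qed

lemma bs_dir_row_other_dir:
  assumes S: "double_code n S" and M: "double_MDS_code n M" "S \<subseteq> M"
    and "k < n" "m < n" "m \<noteq> k" and x: "x \<in> words n"
  shows "count4 (\<lambda>b. x[m := b] \<in> bs_dir n k S) = 0 \<or> count4 (\<lambda>b. x[m := b] \<in> bs_dir n k S) = 2"
proof -
  \<comment> \<open>row b is the k-line through x[m := b], column a the m-line through x[k := a]\<close>
  define s where "s b a \<longleftrightarrow> x[m := b, k := a] \<in> S" for b a
  define mm where "mm b a \<longleftrightarrow> x[m := b, k := a] \<in> M" for b a
  have swap: "x[k := a, m := b] = x[m := b, k := a]" for a b
    using \<open>m \<noteq> k\<close> by (simp add: list_update_swap)
  have "count4 (\<lambda>b. x[m := b] \<in> bs_dir n k S) = count4 (\<lambda>b. \<not> s b (x ! k) \<and> (\<exists>a<4. s b a))"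
  proof (rule count4_cong)
    fix b :: nat assume "b < 4"
    have "x[m := b, k := x ! k] = x[m := b]" using swap[of "x ! k" b] by simp
    then show "x[m := b] \<in> bs_dir n k S \<longleftrightarrow> \<not> s b (x ! k) \<and> (\<exists>a<4. s b a)"
      unfolding s_def bs_dir_def ext_dir_def using update_words[OF x \<open>b < 4\<close>] by auto
  qed
  also have "\<dots> = 0 \<or> \<dots> = 2"
  proof (rule grid_rows_missing_column)
    fix b :: nat assume "b < 4"
    then show "count4 (s b) = 0 \<or> count4 (s b) = 2" and "count4 (mm b) = 2"
      unfolding s_def mm_def using double_code_row[OF S \<open>k < n\<close>] double_MDS_code_row[OF M(1) \<open>k < n\<close>]
        update_words[OF x] by auto
  next
    fix a :: nat assume "a < 4"
    then show "count4 (\<lambda>b. s b a) = 0 \<or> count4 (\<lambda>b. s b a) = 2" and "count4 (\<lambda>b. mm b a) = 2"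
      unfolding s_def mm_def swap[symmetric]
      using double_code_row[OF S \<open>m < n\<close>] double_MDS_code_row[OF M(1) \<open>m < n\<close>]
        update_words[OF x] by auto
  qed (use M(2) nth_words[OF x \<open>k < n\<close>] in \<open>auto simp: s_def mm_def\<close>)
  finally show ?thesis .
qed

lemma double_code_bs_dir:
  assumes "double_code n S" "double_MDS_code n M" "S \<subseteq> M" "k < n"
  shows "double_code n (bs_dir n k S)"
  unfolding double_code_iff_rows
proof (intro conjI allI impI ballI)
  show "bs_dir n k S \<subseteq> words n"
    unfolding bs_dir_def ext_dir_def by blast
  fix m x assume "m < n" "x \<in> words n"
  then show "count4 (\<lambda>a. x[m := a] \<in> bs_dir n k S) = 0 \<or> count4 (\<lambda>a. x[m := a] \<in> bs_dir n k S) = 2"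
    using bs_dir_row_same_dir[OF assms(1,4)] bs_dir_row_other_dir[OF assms] by (cases "m = k") auto
qed

lemma complementable_bs_dir:
  assumes "complementable n S" "k < n"
  shows "complementable n (bs_dir n k S)"
proof -
  obtain M where M: "double_MDS_code n M" "S \<subseteq> M" "double_code n S"
    using assms(1) unfolding complementable_def by blast
  show ?thesis
    unfolding complementable_def
    using double_code_bs_dir[OF M(3,1,2) assms(2)] bs_dir_subset_Diff_words[OF M(3,1,2) assms(2)]
      double_MDS_code_Diff_words[OF M(1)] by blast
qed

lemma complementable_subset:
  "complementable n T \<Longrightarrow> double_code n X \<Longrightarrow> X \<subseteq> T \<Longrightarrow> complementable n X"
  unfolding complementable_def by blast

lemma bs_dir_mono:
  assumes "double_code n X" "double_code n T" "X \<subseteq> T" "k < n"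
  shows "bs_dir n k X \<subseteq> bs_dir n k T"
proof
  fix y assume "y \<in> bs_dir n k X"
  then obtain a where y: "y \<in> words n" "a < 4" "y[k := a] \<in> X" "y \<notin> X"
    unfolding bs_dir_def ext_dir_def by blast
  have "y[k := y ! k] \<in> X \<longleftrightarrow> y[k := y ! k] \<in> T"
    using double_code_subset_row_eq[OF assms y(1-3)] nth_words[OF y(1) assms(4)] by blast
  then show "y \<in> bs_dir n k T"
    using y assms(3) unfolding bs_dir_def ext_dir_def by auto
qed

lemma bs_dir_disjoint:
  assumes "double_code n X" "double_code n T" "X \<subseteq> T" "Y \<subseteq> T" "X \<inter> Y = {}" "k < n"
  shows "bs_dir n k X \<inter> bs_dir n k Y = {}"
proof (rule ccontr)
  assume "bs_dir n k X \<inter> bs_dir n k Y \<noteq> {}"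
  then obtain y a b where y: "y \<in> words n" "a < 4" "y[k := a] \<in> X" "b < 4" "y[k := b] \<in> Y"
    unfolding bs_dir_def ext_dir_def by blast
  then have "y[k := b] \<in> X"
    using double_code_subset_row_eq[OF assms(1,2,3,6) y(1-3)] assms(4) by blast
  then show False using y(5) assms(5) by blast
qed

definition double_code_partition :: "nat \<Rightarrow> nat list set set \<Rightarrow> nat list set \<Rightarrow> bool" where
  "double_code_partition n P S \<longleftrightarrow> card P \<ge> 2 \<and> (\<forall>T\<in>P. T \<noteq> {} \<and> double_code n T) \<and>
     (\<forall>T\<in>P. \<forall>U\<in>P. T \<noteq> U \<longrightarrow> T \<inter> U = {}) \<and> \<Union>P = S"

lemma prime_code_iff_no_partition:
  "prime_code n S \<longleftrightarrow> complementable n S \<and> S \<noteq> {} \<and> \<not> (\<exists>P. double_code_partition n P S)"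
  unfolding prime_code_def double_code_partition_def by blast

lemma double_code_partition_bs_dir:
  assumes T: "complementable n T" and "k < n" and P: "double_code_partition n P T"
  shows "double_code_partition n (bs_dir n k ` P) (bs_dir n k T)"
proof -
  have dT: "double_code n T" using complementable_imp_double_code[OF T] .
  from P have card_P: "card P \<ge> 2" and P_parts: "\<forall>X\<in>P. X \<noteq> {} \<and> double_code n X"
    and P_disj: "\<forall>X\<in>P. \<forall>Y\<in>P. X \<noteq> Y \<longrightarrow> X \<inter> Y = {}" and P_Un: "\<Union>P = T"
    unfolding double_code_partition_def by blast+
  have X: "X \<noteq> {}" "double_code n X" "X \<subseteq> T" if "X \<in> P" for X
    using P_parts that Union_upper[OF that] unfolding P_Un by blast+
  have bs_X: "bs_dir n k X \<noteq> {}" "double_code n (bs_dir n k X)" if "X \<in> P" for X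
    using bs_dir_not_empty[OF X(2,1) \<open>k < n\<close>] complementable_subset[OF T X(2,3)]
      complementable_bs_dir[OF _ \<open>k < n\<close>] complementable_imp_double_code that by blast+
  have disj: "bs_dir n k X \<inter> bs_dir n k Y = {}" if "X \<in> P" "Y \<in> P" "X \<noteq> Y" for X Y
    using bs_dir_disjoint[OF X(2)[OF that(1)] dT X(3)[OF that(1)] X(3)[OF that(2)] _ \<open>k < n\<close>]
      P_disj that by blast
  have "inj_on (bs_dir n k) P"
  proof (rule inj_onI)
    fix X Y assume "X \<in> P" "Y \<in> P" "bs_dir n k X = bs_dir n k Y"
    then show "X = Y" using disj bs_X(1) by fastforce
  qed
  then have "card (bs_dir n k ` P) \<ge> 2"
    using card_P by (simp add: card_image)
  moreover have "\<Union>(bs_dir n k ` P) = bs_dir n k T"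
  proof
    show "\<Union>(bs_dir n k ` P) \<subseteq> bs_dir n k T"
      using bs_dir_mono[OF _ dT _ \<open>k < n\<close>] X by blast
    show "bs_dir n k T \<subseteq> \<Union>(bs_dir n k ` P)"
      using P_Un unfolding bs_dir_def ext_dir_def by blast
  qed
  moreover have "\<forall>Z\<in>bs_dir n k ` P. Z \<noteq> {} \<and> double_code n Z"
    using bs_X by blast
  moreover have "\<forall>Z\<in>bs_dir n k ` P. \<forall>W\<in>bs_dir n k ` P. Z \<noteq> W \<longrightarrow> Z \<inter> W = {}"
    using disj by fastforce
  ultimately show ?thesis
    unfolding double_code_partition_def by blast
qed

lemma prime_code_imp_complementable: "prime_code n S \<Longrightarrow> complementable n S"
  unfolding prime_code_def by blast

lemma prime_code_bs_dir:
  assumes S: "prime_code n S" and "k < n"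
  shows "prime_code n (bs_dir n k S)"
proof -
  have cS: "complementable n S" and "S \<noteq> {}"
    using S unfolding prime_code_def by blast+
  have dS: "double_code n S"
    using complementable_imp_double_code[OF cS] .
  have "\<not> double_code_partition n P (bs_dir n k S)" for P
  proof
    assume "double_code_partition n P (bs_dir n k S)"
    then have "double_code_partition n (bs_dir n k ` P) S"
      using double_code_partition_bs_dir[OF complementable_bs_dir[OF cS \<open>k < n\<close>] \<open>k < n\<close>]
      by (simp add: bs_dir_bs_dir[OF dS \<open>k < n\<close>])
    then show False using S unfolding prime_code_iff_no_partition by blast
  qed
  then show ?thesis
    using complementable_bs_dir[OF cS \<open>k < n\<close>] bs_dir_not_empty[OF dS \<open>S \<noteq> {}\<close> \<open>k < n\<close>]
    by (simp add: prime_code_iff_no_partition)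
qed

lemma complementable_bs_dir_iff:
  assumes "double_code n S" "k < n"
  shows "complementable n (bs_dir n k S) \<longleftrightarrow> complementable n S"
  using complementable_bs_dir[OF _ assms(2), of S] complementable_bs_dir[OF _ assms(2), of "bs_dir n k S"]
  by (auto simp: bs_dir_bs_dir[OF assms])

lemma prime_code_bs_dir_iff:
  assumes "double_code n S" "k < n"
  shows "prime_code n (bs_dir n k S) \<longleftrightarrow> prime_code n S"
  using prime_code_bs_dir[OF _ assms(2), of S] prime_code_bs_dir[OF _ assms(2), of "bs_dir n k S"]
  by (auto simp: bs_dir_bs_dir[OF assms])

theorem proposition6:
  fixes n i :: nat and S :: "nat list set"
  assumes "double_code n S" and "i \<in> {1..n}"
  shows "(complementable n S \<longleftrightarrow>
            double_code n (bs_i n i S) \<and> complementable n (bs_i n i S))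
       \<and> (prime_code n S \<longleftrightarrow>
            double_code n (bs_i n i S) \<and> prime_code n (bs_i n i S))"
proof -
  have "i - 1 < n" using assms(2) by auto
  then show ?thesis
    unfolding bs_i_eq_bs_dir[OF assms(2)]
    using complementable_bs_dir_iff[OF assms(1)] prime_code_bs_dir_iff[OF assms(1)]
      complementable_imp_double_code prime_code_imp_complementable by blast
qed

end
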